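(* Let $(P_t)_{t>0}$ be a Markovian semigroup on $\mathscr{B}_b(\mathbb{R}^d)$ and fix $t>0$. Suppose that $P_tf(x)=\int_{\mathbb{R}^d}f(y)q_t(x,y)\,dy$ for all $f\in\mathscr{B}_b(\mathbb{R}^d)$, for some nonnegative measurable function $q_t:\mathbb{R}^d\times\mathbb{R}^d\to\mathbb{R}$. Assume that $P_t$ is Feller and that for every $M>0$ and every $x_0\in\mathbb{R}^d$ there exist $p>1$ and $\gamma>0$ such that \[ \sup_{x\in\mathbb{R}^d:\,|x-x_0|<\gamma}\int_{\{y\in\mathbb{R}^d:\,|y|\leq M\}}q_t(x,y)^p\,dy<\infty. \] Then $P_t$ is strong Feller.
   Context: $\mathscr{B}_b(\mathbb{R}^d)$ is the space of bounded Borel functions on $\mathbb{R}^d$ and $C_b(\mathbb{R}^d)$ the bounded continuous functions. A linear positivity-preserving operator $A$ on $\mathscr{B}_b(\mathbb{R}^d)$ is Markovian if $\|A\phi\|_\infty\leq\|\phi\|_\infty$ for all $\phi$ and $A1=1$; it is Feller if $A(C_b(\mathbb{R}^d))\subseteq C_b(\mathbb{R}^d)$ and strong Feller if $A(\mathscr{B}_b(\mathbb{R}^d))\subseteq C_b(\mathbb{R}^d)$. *)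

theory Defs
  imports "HOL-Analysis.Analysis"
begin

definition Bb :: "('a::euclidean_space \<Rightarrow> real) set" where
  "Bb = {f. f \<in> borel_measurable borel \<and> bounded (range f)}"

definition sup_norm :: "('a \<Rightarrow> real) \<Rightarrow> real" where
  "sup_norm f = (SUP y. \<bar>f y\<bar>)"

definition markovian_op :: "(('a::euclidean_space \<Rightarrow> real) \<Rightarrow> ('a \<Rightarrow> real)) \<Rightarrow> bool" where
  "markovian_op A \<longleftrightarrow>
     (\<forall>f\<in>Bb. A f \<in> Bb) \<and>
     (\<forall>f\<in>Bb. \<forall>g\<in>Bb. \<forall>a b::real. A (\<lambda>x. a * f x + b * g x) = (\<lambda>x. a * A f x + b * A g x)) \<and>
     (\<forall>f\<in>Bb. (\<forall>x. f x \<ge> 0) \<longrightarrow> (\<forall>x. A f x \<ge> 0)) \<and>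
     (\<forall>f\<in>Bb. sup_norm (A f) \<le> sup_norm f) \<and>
     A (\<lambda>_. 1) = (\<lambda>_. 1)"

definition markovian_semigroup :: "(real \<Rightarrow> ('a::euclidean_space \<Rightarrow> real) \<Rightarrow> ('a \<Rightarrow> real)) \<Rightarrow> bool" where
  "markovian_semigroup P \<longleftrightarrow>
     (\<forall>t>0. markovian_op (P t)) \<and>
     (\<forall>s>0. \<forall>t>0. \<forall>f\<in>Bb. P (s + t) f = P s (P t f))"

definition feller :: "(('a::euclidean_space \<Rightarrow> real) \<Rightarrow> ('a \<Rightarrow> real)) \<Rightarrow> bool" where
  "feller A \<longleftrightarrow> (\<forall>f\<in>Bb. continuous_on UNIV f \<longrightarrow> continuous_on UNIV (A f) \<and> bounded (range (A f)))"

definition strong_feller :: "(('a::euclidean_space \<Rightarrow> real) \<Rightarrow> ('a \<Rightarrow> real)) \<Rightarrow> bool" where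
  "strong_feller A \<longleftrightarrow> (\<forall>f\<in>Bb. continuous_on UNIV (A f) \<and> bounded (range (A f)))"

end

theory Submission
  imports Defs
begin

text \<open>
  By Lusin's theorem f is the a.e. limit of continuous g_n with
  |g_n - f| <= c, and every P_t g_n is continuous by the Feller property. Splitting the integral of
  |g_n - f| q_t(x,.) into the regions |y| > M + 1, and |y| <= M + 1 with q_t <= K resp. q_t > K
  (where q_t <= K^(1-p) q_t^p) gives
    |P_t g_n x - P_t f x| <= c P_t psi_M x + K int_{|y|<=M+1} |g_n - f| + c K^(1-p) S,
  with psi_M a continuous cutoff vanishing on the ball of radius M and S the local L^p bound near x0.
  The first term is small near x0 for large M, since P_t psi_M x0 -> 0 and P_t psi_M is continuous;
  the third is small for large K; and then the second is small for large n by dominated convergence.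
  So near x0 the function P_t f is uniformly approximated by continuous functions.
\<close>

lemma Bb_boundedE:
  assumes "f \<in> Bb"
  obtains B where "\<And>y. \<bar>f y\<bar> \<le> B"
  using assms unfolding Bb_def bounded_iff by auto

lemma Bb_continuousI:
  fixes g :: "'a::euclidean_space \<Rightarrow> real"
  assumes "continuous_on UNIV g" "\<And>y. \<bar>g y\<bar> \<le> B"
  shows "g \<in> Bb"
  using assms unfolding Bb_def bounded_iff by (auto intro: borel_measurable_continuous_onI)

definition cutoff :: "real \<Rightarrow> 'a::real_normed_vector \<Rightarrow> real" where
  "cutoff M y = max 0 (min 1 (norm y - M))"

lemma continuous_on_cutoff: "continuous_on UNIV (cutoff M)"
  unfolding cutoff_def by (intro continuous_intros)

lemma borel_measurable_cutoff [measurable]: "cutoff M \<in> borel_measurable borel"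
  using continuous_on_cutoff by (rule borel_measurable_continuous_onI)

lemma cutoff_nonneg: "0 \<le> cutoff M y"
  and cutoff_le_1: "cutoff M y \<le> 1"
  unfolding cutoff_def by auto

lemma cutoff_eq_1: "M + 1 < norm y \<Longrightarrow> cutoff M y = 1"
  and cutoff_eq_0: "norm y \<le> M \<Longrightarrow> cutoff M y = 0"
  unfolding cutoff_def by auto

lemma cutoff_in_Bb: "cutoff M \<in> Bb"
  by (rule Bb_continuousI[where B = 1, OF continuous_on_cutoff])
    (simp add: abs_of_nonneg[OF cutoff_nonneg] cutoff_le_1)

lemma Bb_AE_limit_of_continuous:
  fixes f :: "'a::euclidean_space \<Rightarrow> real"
  assumes f: "f \<in> Bb"
  obtains g c where "\<And>n. g n \<in> Bb" "\<And>n. continuous_on UNIV (g n)" "\<And>n y. \<bar>g n y - f y\<bar> \<le> c"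
    and "AE y in lborel. (\<lambda>n. g n y) \<longlonglongrightarrow> f y"
proof -
  obtain B where bound: "\<And>y. \<bar>f y\<bar> \<le> B" using Bb_boundedE[OF f] by blast
  have "f measurable_on UNIV"
    using f by (intro lebesgue_measurable_imp_measurable_on_real) (auto simp: Bb_def intro: measurable_completion)
  then obtain N h where N: "negligible N" and h: "\<And>n. continuous_on UNIV (h n)"
    and lim: "\<And>y. y \<notin> N \<Longrightarrow> (\<lambda>n. h n y) \<longlonglongrightarrow> f y"
    unfolding measurable_on_def by auto
  define g where "g n y = max (-B) (min B (h n y))" for n y
  have cont: "continuous_on UNIV (g n)" for n
    unfolding g_def using h by (intro continuous_intros)
  have g_bound: "\<bar>g n y\<bar> \<le> B" for n y
    using bound[of y] unfolding g_def by auto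
  have "AE y in lebesgue. y \<notin> N"
    using N by (intro AE_not_in) (simp add: negligible_iff_null_sets)
  then have "AE y in lborel. y \<notin> N"
    by (simp add: AE_completion_iff)
  then have "AE y in lborel. (\<lambda>n. g n y) \<longlonglongrightarrow> f y"
  proof eventually_elim
    case (elim y)
    have "(\<lambda>n. g n y) \<longlonglongrightarrow> max (-B) (min B (f y))"
      unfolding g_def by (intro tendsto_intros lim elim)
    moreover have "max (-B) (min B (f y)) = f y"
      using bound[of y] by auto
    ultimately show ?case by simp
  qed
  moreover have "\<bar>g n y - f y\<bar> \<le> 2 * B" for n y
    using g_bound[of n y] bound[of y] by simp
  ultimately show thesis
    using that Bb_continuousI[OF cont g_bound] cont by blast
qed

lemma mult_le_split_powr:
  fixes a b c K p :: real
  assumes "0 \<le> a" "a \<le> c" "0 \<le> b" "0 < K" "1 < p"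
  shows "a * b \<le> K * a + c * K powr (1 - p) * b powr p"
proof (cases "b \<le> K")
  case True
  then have "a * b \<le> K * a" using assms by (metis mult.commute mult_left_mono)
  moreover have "0 \<le> c * K powr (1 - p) * b powr p" using assms by simp
  ultimately show ?thesis by linarith
next
  case False
  have "b = K powr (1 - p) * (K powr (p - 1) * b)"
    using assms by (simp add: powr_add[symmetric])
  also have "\<dots> \<le> K powr (1 - p) * b powr p"
  proof -
    have "K powr (p - 1) \<le> b powr (p - 1)"
      using False assms by (intro powr_mono2) auto
    then have "K powr (p - 1) * b \<le> b powr (p - 1) * b"
      using assms by (intro mult_right_mono) auto
    also have "\<dots> = b powr p"
      using False assms powr_mult_base[of b "p - 1"] by (simp add: mult.commute)
    finally show ?thesis by (simp add: mult_left_mono)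
  qed
  finally have "a * b \<le> c * (K powr (1 - p) * b powr p)"
    using assms by (intro mult_mono) auto
  moreover have "0 \<le> K * a" using assms by simp
  ultimately show ?thesis by (simp add: mult.assoc)
qed

lemma ex_pos_mult_powr_less:
  fixes a e p :: real
  assumes "1 < p" "0 < e"
  shows "\<exists>K>0. a * K powr (1 - p) < e"
proof -
  have "((\<lambda>K. a * K powr (1 - p)) \<longlongrightarrow> a * 0) at_top"
    using assms by (intro tendsto_intros tendsto_neg_powr filterlim_ident) auto
  then have "\<forall>\<^sub>F K in at_top. 0 < K \<and> a * K powr (1 - p) < e"
    using assms by (intro eventually_conj eventually_gt_at_top order_tendstoD(2)) auto
  then show ?thesis by (auto simp: eventually_at_top_linorder)
qed

lemma integrable_bounded_mult:
  fixes h Q :: "'a \<Rightarrow> real"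
  assumes "integrable M Q" "h \<in> borel_measurable M" "\<And>y. \<bar>h y\<bar> \<le> c"
  shows "integrable M (\<lambda>y. h y * Q y)"
proof (rule Bochner_Integration.integrable_bound[OF integrable_mult_right[OF assms(1), of c]])
  show "(\<lambda>y. h y * Q y) \<in> borel_measurable M"
    using assms(1,2) by measurable
  show "AE y in M. norm (h y * Q y) \<le> norm (c * Q y)"
  proof (intro AE_I2)
    fix y
    have "\<bar>h y\<bar> \<le> \<bar>c\<bar>" using assms(3)[of y] by linarith
    then show "norm (h y * Q y) \<le> norm (c * Q y)" by (simp add: abs_mult mult_right_mono)
  qed
qed

lemma integral_indicator_powr_le:
  fixes Q :: "'a \<Rightarrow> real"
  assumes [measurable]: "A \<in> sets M" "Q \<in> borel_measurable M"
    and S: "(\<integral>\<^sup>+ y. indicator A y * ennreal (Q y powr p) \<partial>M) \<le> ennreal S" "0 \<le> S"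
  shows "integrable M (\<lambda>y. indicator A y * Q y powr p)"
    and "(\<integral> y. indicator A y * Q y powr p \<partial>M) \<le> S"
proof -
  have nn: "(\<integral>\<^sup>+ y. ennreal (indicator A y * Q y powr p) \<partial>M) \<le> ennreal S"
    using S(1) by (subst nn_integral_cong[where v = "\<lambda>y. indicator A y * ennreal (Q y powr p)"])
      (auto simp: indicator_def)
  show "integrable M (\<lambda>y. indicator A y * Q y powr p)"
    using nn by (intro integrableI_nonneg) (auto simp: top.not_eq_extremum le_less_trans)
  show "(\<integral> y. indicator A y * Q y powr p \<partial>M) \<le> S"
    using nn S(2) by (rule integral_real_bounded[rotated])
qed

lemma abs_integral_mult_le_split:
  fixes h Q w :: "'a \<Rightarrow> real"
  assumes [measurable]: "A \<in> sets M" "h \<in> borel_measurable M" "w \<in> borel_measurable M"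
    and A_finite: "emeasure M A < \<infinity>"
    and Q: "integrable M Q" "\<And>y. 0 \<le> Q y"
    and h: "\<And>y. \<bar>h y\<bar> \<le> c"
    and w: "\<And>y. 0 \<le> w y" "\<And>y. w y \<le> 1" "\<And>y. y \<notin> A \<Longrightarrow> w y = 1"
    and K: "0 < K" and p: "1 < p"
    and S: "(\<integral>\<^sup>+ y. indicator A y * ennreal (Q y powr p) \<partial>M) \<le> ennreal S" "0 \<le> S"
  shows "\<bar>\<integral> y. h y * Q y \<partial>M\<bar> \<le> c * (\<integral> y. w y * Q y \<partial>M)
           + K * (\<integral> y. indicator A y * \<bar>h y\<bar> \<partial>M) + c * K powr (1 - p) * S"
proof -
  have c: "0 \<le> c" using h[of undefined] by linarith
  have Q_meas [measurable]: "Q \<in> borel_measurable M"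
    using Q(1) by (rule borel_measurable_integrable)
  have int_hQ: "integrable M (\<lambda>y. h y * Q y)"
    using Q(1) assms(2) h by (rule integrable_bounded_mult)
  have int_wQ: "integrable M (\<lambda>y. w y * Q y)"
    using w by (intro integrable_bounded_mult[OF Q(1), where c = 1]) auto
  have int_Ah: "integrable M (\<lambda>y. indicator A y * \<bar>h y\<bar>)"
    using integrable_bounded_mult[OF integrable_real_indicator[OF _ A_finite], of "\<lambda>y. \<bar>h y\<bar>" c] h
    by (simp add: mult.commute)
  note int_AQp = integral_indicator_powr_le[OF _ Q_meas S]
  have pointwise: "\<bar>h y * Q y\<bar> \<le> c * (w y * Q y) + K * (indicator A y * \<bar>h y\<bar>)
      + c * K powr (1 - p) * (indicator A y * Q y powr p)" for y
  proof (cases "y \<in> A")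
    case True
    have "\<bar>h y\<bar> * Q y \<le> K * \<bar>h y\<bar> + c * K powr (1 - p) * Q y powr p"
      using h Q(2) K p by (intro mult_le_split_powr) auto
    moreover have "0 \<le> c * (w y * Q y)" using c w Q(2) by simp
    ultimately show ?thesis using True Q(2) by (simp add: abs_mult)
  next
    case False
    then show ?thesis using h Q(2) w(3) by (simp add: abs_mult mult_right_mono)
  qed
  have "\<bar>\<integral> y. h y * Q y \<partial>M\<bar> \<le> (\<integral> y. \<bar>h y * Q y\<bar> \<partial>M)"
    by (rule integral_abs_bound)
  also have "\<dots> \<le> (\<integral> y. c * (w y * Q y) + K * (indicator A y * \<bar>h y\<bar>)
      + c * K powr (1 - p) * (indicator A y * Q y powr p) \<partial>M)"
    using int_hQ int_wQ int_Ah int_AQp(1) pointwise by (intro integral_mono) auto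
  also have "\<dots> = c * (\<integral> y. w y * Q y \<partial>M) + K * (\<integral> y. indicator A y * \<bar>h y\<bar> \<partial>M)
      + c * K powr (1 - p) * (\<integral> y. indicator A y * Q y powr p \<partial>M)"
    using int_wQ int_Ah int_AQp(1) by simp
  also have "\<dots> \<le> c * (\<integral> y. w y * Q y \<partial>M) + K * (\<integral> y. indicator A y * \<bar>h y\<bar> \<partial>M)
      + c * K powr (1 - p) * S"
    using int_AQp(2) c by (simp add: mult_left_mono)
  finally show ?thesis .
qed

lemma integral_cutoff_mult_tendsto_0:
  fixes Q :: "'a::euclidean_space \<Rightarrow> real"
  assumes Q: "integrable lborel Q"
  shows "(\<lambda>n. \<integral> y. cutoff (real n) y * Q y \<partial>lborel) \<longlonglongrightarrow> 0"
proof -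
  have [measurable]: "Q \<in> borel_measurable borel"
    using borel_measurable_integrable[OF Q] by simp
  have "(\<lambda>n. \<integral> y. cutoff (real n) y * Q y \<partial>lborel) \<longlonglongrightarrow> (\<integral> y. 0 \<partial>(lborel :: 'a measure))"
  proof (rule integral_dominated_convergence
      [where s = "\<lambda>n y. cutoff (real n) y * Q y" and f = "\<lambda>y. 0" and w = "\<lambda>y. \<bar>Q y\<bar>"])
    show "AE y in lborel. (\<lambda>n. cutoff (real n) y * Q y) \<longlonglongrightarrow> 0"
    proof (intro AE_I2 tendsto_eventually)
      fix y :: 'a
      show "\<forall>\<^sub>F n in sequentially. cutoff (real n) y * Q y = 0"
        using eventually_ge_at_top[of "nat \<lceil>norm y\<rceil>"]
        by eventually_elim (simp add: cutoff_eq_0 real_nat_ceiling_ge order.trans)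
    qed
    show "AE y in lborel. norm (cutoff (real n) y * Q y) \<le> \<bar>Q y\<bar>" for n
      by (intro AE_I2)
        (simp add: abs_mult abs_of_nonneg[OF cutoff_nonneg] mult_left_le_one_le[OF _ cutoff_nonneg cutoff_le_1])
  qed (use Q in auto)
  then show ?thesis by simp
qed

lemma integral_indicator_abs_diff_tendsto_0:
  fixes f :: "'a \<Rightarrow> real"
  assumes [measurable]: "A \<in> sets M" "f \<in> borel_measurable M" "\<And>n. g n \<in> borel_measurable M"
    and A_finite: "emeasure M A < \<infinity>"
    and bound: "\<And>n y. \<bar>g n y - f y\<bar> \<le> c"
    and lim: "AE y in M. (\<lambda>n. g n y) \<longlonglongrightarrow> f y"
  shows "(\<lambda>n. \<integral> y. indicator A y * \<bar>g n y - f y\<bar> \<partial>M) \<longlonglongrightarrow> 0"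
proof -
  have "(\<lambda>n. \<integral> y. indicator A y * \<bar>g n y - f y\<bar> \<partial>M) \<longlonglongrightarrow> (\<integral> y. 0 \<partial>M)"
  proof (rule integral_dominated_convergence
      [where s = "\<lambda>n y. indicator A y * \<bar>g n y - f y\<bar>" and f = "\<lambda>y. 0" and w = "\<lambda>y. indicator A y * c"])
    show "AE y in M. (\<lambda>n. indicator A y * \<bar>g n y - f y\<bar>) \<longlonglongrightarrow> 0"
    using lim
    proof eventually_elim
      case (elim y)
      then have "(\<lambda>n. indicator A y * \<bar>g n y - f y\<bar>) \<longlonglongrightarrow> indicator A y * \<bar>f y - f y\<bar>"
        by (intro tendsto_intros)
      then show ?case by simp
    qed
    show "AE y in M. norm (indicator A y * \<bar>g n y - f y\<bar>) \<le> indicator A y * c" for n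
      using bound by (intro AE_I2) (simp add: indicator_def)
  qed (use A_finite in auto)
  then show ?thesis by simp
qed

lemma isCont_if_approximable_near:
  fixes F :: "'a::t2_space \<Rightarrow> real"
  assumes approx: "\<And>e. 0 < e \<Longrightarrow> \<exists>G. isCont G x0 \<and> (\<forall>\<^sub>F x in nhds x0. \<bar>G x - F x\<bar> \<le> e)"
  shows "isCont F x0"
proof -
  have "(F \<longlongrightarrow> F x0) (nhds x0)"
  proof (rule tendstoI)
    fix e :: real
    assume "0 < e"
    then obtain G where G: "isCont G x0" and near: "\<forall>\<^sub>F x in nhds x0. \<bar>G x - F x\<bar> \<le> e / 3"
      using approx[of "e / 3"] by auto
    have at_x0: "\<bar>G x0 - F x0\<bar> \<le> e / 3"
      using near by (rule eventually_nhds_x_imp_x)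
    have "(G \<longlongrightarrow> G x0) (nhds x0)"
      using G continuous_at tendsto_at_iff_tendsto_nhds by blast
    then have "\<forall>\<^sub>F x in nhds x0. dist (G x) (G x0) < e / 3"
      using \<open>0 < e\<close> by (intro tendstoD) auto
    then show "\<forall>\<^sub>F x in nhds x0. dist (F x) (F x0) < e"
      using near
    proof eventually_elim
      case (elim x)
      then show ?case using at_x0 unfolding dist_real_def by linarith
    qed
  qed
  then show ?thesis
    using continuous_at tendsto_at_iff_tendsto_nhds by blast
qed

lemma emeasure_closed_ball_set_finite: "emeasure lborel {y::'a::euclidean_space. norm y \<le> r} < \<infinity>"
  by (intro emeasure_bounded_finite) (auto simp: bounded_iff)

context
  fixes T :: "('a::euclidean_space \<Rightarrow> real) \<Rightarrow> 'a \<Rightarrow> real" and q :: "'a \<Rightarrow> 'a \<Rightarrow> real"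
  assumes q_measurable [measurable]: "\<And>x. q x \<in> borel_measurable borel"
    and q_nonneg: "\<And>x y. 0 \<le> q x y"
    and q_integrable: "\<And>x. integrable lborel (q x)"
    and T_kernel: "\<And>f x. f \<in> Bb \<Longrightarrow> T f x = (\<integral> y. f y * q x y \<partial>lborel)"
begin

lemma kernel_integrable:
  assumes "f \<in> Bb"
  shows "integrable lborel (\<lambda>y. f y * q x y)"
  using assms by (elim Bb_boundedE, intro integrable_bounded_mult[OF q_integrable]) (auto simp: Bb_def)

lemma kernel_abs_diff_le:
  assumes f: "f \<in> Bb" and g: "g \<in> Bb" and diff: "\<And>y. \<bar>g y - f y\<bar> \<le> c"
    and K: "0 < K" and p: "1 < p" and S: "0 \<le> S"
    and local_Lp: "(\<integral>\<^sup>+ y. indicator {y. norm y \<le> M + 1} y * ennreal (q x y powr p) \<partial>lborel) \<le> ennreal S"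
  shows "\<bar>T g x - T f x\<bar> \<le> c * T (cutoff M) x
    + K * (\<integral> y. indicator {y. norm y \<le> M + 1} y * \<bar>g y - f y\<bar> \<partial>lborel) + c * K powr (1 - p) * S"
proof -
  have [measurable]: "f \<in> borel_measurable borel" "g \<in> borel_measurable borel"
    using f g by (simp_all add: Bb_def)
  have "T g x - T f x = (\<integral> y. (g y - f y) * q x y \<partial>lborel)"
    using kernel_integrable[OF f] kernel_integrable[OF g] by (simp add: T_kernel f g left_diff_distrib)
  also have "\<bar>\<dots>\<bar> \<le> c * (\<integral> y. cutoff M y * q x y \<partial>lborel)
      + K * (\<integral> y. indicator {y. norm y \<le> M + 1} y * \<bar>g y - f y\<bar> \<partial>lborel) + c * K powr (1 - p) * S"
    by (rule abs_integral_mult_le_split[OF _ _ _ emeasure_closed_ball_set_finite q_integrable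
          q_nonneg diff cutoff_nonneg cutoff_le_1 _ K p local_Lp S])
      (auto intro: cutoff_eq_1)
  finally show ?thesis by (simp add: T_kernel cutoff_in_Bb)
qed

context
  assumes T_feller: "\<And>g. g \<in> Bb \<Longrightarrow> continuous_on UNIV g \<Longrightarrow> continuous_on UNIV (T g)"
    and q_local_Lp: "\<And>M x0. 0 < M \<Longrightarrow> \<exists>p>1. \<exists>\<gamma>>0.
      (SUP x\<in>ball x0 \<gamma>. \<integral>\<^sup>+ y. indicator {y. norm y \<le> M} y * ennreal (q x y powr p) \<partial>lborel) < \<infinity>"
begin

lemma local_Lp_boundE:
  assumes "0 < M"
  obtains p \<gamma> S where "1 < p" "0 < \<gamma>" "0 \<le> S"
    "\<And>x. x \<in> ball x0 \<gamma> \<Longrightarrow>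
      (\<integral>\<^sup>+ y. indicator {y. norm y \<le> M} y * ennreal (q x y powr p) \<partial>lborel) \<le> ennreal S"
proof -
  obtain p \<gamma> where p: "1 < p" "0 < \<gamma>" and finite:
    "(SUP x\<in>ball x0 \<gamma>. \<integral>\<^sup>+ y. indicator {y. norm y \<le> M} y * ennreal (q x y powr p) \<partial>lborel) < \<infinity>"
    using q_local_Lp[OF assms] by blast
  define S where "S = enn2real (SUP x\<in>ball x0 \<gamma>.
    \<integral>\<^sup>+ y. indicator {y. norm y \<le> M} y * ennreal (q x y powr p) \<partial>lborel)"
  have bound: "(\<integral>\<^sup>+ y. indicator {y. norm y \<le> M} y * ennreal (q x y powr p) \<partial>lborel) \<le> ennreal S"
    if "x \<in> ball x0 \<gamma>" for x
    unfolding S_def using finite that by (simp del: mem_ball) (rule SUP_upper[OF that])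
  show thesis
    by (rule that[OF p _ bound]) (simp add: S_def)
qed

lemma eventually_kernel_cutoff_less:
  assumes "0 < \<delta>"
  obtains M where "0 \<le> M" "\<forall>\<^sub>F x in nhds x0. T (cutoff M) x < \<delta>"
proof -
  have "(\<lambda>n. T (cutoff (real n)) x0) \<longlonglongrightarrow> 0"
    using integral_cutoff_mult_tendsto_0[OF q_integrable] by (simp add: T_kernel cutoff_in_Bb)
  from order_tendstoD(2)[OF this assms] obtain n where n: "T (cutoff (real n)) x0 < \<delta>"
    by (auto simp: eventually_sequentially)
  have "isCont (T (cutoff (real n))) x0"
    using T_feller[OF cutoff_in_Bb continuous_on_cutoff] by (simp add: continuous_on_eq_continuous_at)
  then have "(T (cutoff (real n)) \<longlongrightarrow> T (cutoff (real n)) x0) (nhds x0)"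
    using continuous_at tendsto_at_iff_tendsto_nhds by blast
  from order_tendstoD(2)[OF this n] show thesis
    by (intro that[of "real n"]) auto
qed

lemma kernel_approximable_near:
  assumes f: "f \<in> Bb" and e: "0 < e"
  shows "\<exists>G. isCont G x0 \<and> (\<forall>\<^sub>F x in nhds x0. \<bar>G x - T f x\<bar> \<le> e)"
proof -
  obtain g c where g_Bb: "\<And>n. g n \<in> Bb" and g_cont: "\<And>n. continuous_on UNIV (g n)"
    and diff: "\<And>n y. \<bar>g n y - f y\<bar> \<le> c" and g_lim: "AE y in lborel. (\<lambda>n. g n y) \<longlonglongrightarrow> f y"
    using Bb_AE_limit_of_continuous[OF f] by blast
  have [measurable]: "f \<in> borel_measurable borel" "g n \<in> borel_measurable borel" for n
    using f g_Bb by (simp_all add: Bb_def)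
  have c: "0 \<le> c" using diff[of 0 x0] by linarith
  define \<delta> where "\<delta> = e / (3 * (c + 1))"
  have c\<delta>: "c * \<delta> \<le> e / 3"
    using c e by (simp add: \<delta>_def field_simps)
  obtain M where "0 \<le> M" and tail_small: "\<forall>\<^sub>F x in nhds x0. T (cutoff M) x < \<delta>"
    using eventually_kernel_cutoff_less[of \<delta>] c e by (auto simp: \<delta>_def)
  then obtain p \<gamma> S where p: "1 < p" and \<gamma>: "0 < \<gamma>" and S: "0 \<le> S" and S_bound:
    "\<And>x. x \<in> ball x0 \<gamma> \<Longrightarrow>
      (\<integral>\<^sup>+ y. indicator {y. norm y \<le> M + 1} y * ennreal (q x y powr p) \<partial>lborel) \<le> ennreal S"
    using local_Lp_boundE[of "M + 1" x0] by auto
  obtain K where K: "0 < K" "c * K powr (1 - p) * S < e / 3"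
    using ex_pos_mult_powr_less[OF p, of "e / 3" "c * S"] e by (auto simp: mult_ac)
  have "(\<lambda>n. K * (\<integral> y. indicator {y. norm y \<le> M + 1} y * \<bar>g n y - f y\<bar> \<partial>lborel)) \<longlonglongrightarrow> K * 0"
    using g_lim diff emeasure_closed_ball_set_finite
    by (intro tendsto_intros integral_indicator_abs_diff_tendsto_0) auto
  then have "\<forall>\<^sub>F n in sequentially.
      K * (\<integral> y. indicator {y. norm y \<le> M + 1} y * \<bar>g n y - f y\<bar> \<partial>lborel) < e / 3"
    using e by (intro order_tendstoD(2)) auto
  then obtain n
    where n: "K * (\<integral> y. indicator {y. norm y \<le> M + 1} y * \<bar>g n y - f y\<bar> \<partial>lborel) < e / 3"
    by (auto simp: eventually_sequentially)
  have "\<forall>\<^sub>F x in nhds x0. x \<in> ball x0 \<gamma>"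
    using \<gamma> by (intro eventually_nhds_in_open) auto
  then have "\<forall>\<^sub>F x in nhds x0. \<bar>T (g n) x - T f x\<bar> \<le> e"
    using tail_small
  proof eventually_elim
    case (elim x)
    have "c * T (cutoff M) x \<le> c * \<delta>"
      using c elim(2) by (intro mult_left_mono) auto
    with kernel_abs_diff_le[OF f g_Bb[of n] diff[of n] K(1) p S S_bound[OF elim(1)]] c\<delta> K(2) n
    show ?case by linarith
  qed
  moreover have "isCont (T (g n)) x0"
    using T_feller[OF g_Bb g_cont] by (simp add: continuous_on_eq_continuous_at)
  ultimately show ?thesis by blast
qed

lemma continuous_on_kernel: "f \<in> Bb \<Longrightarrow> continuous_on UNIV (T f)"
  by (simp add: continuous_on_eq_continuous_at isCont_if_approximable_near kernel_approximable_near)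

end

end

theorem lemma5p1:
  fixes P :: "real \<Rightarrow> ('a::euclidean_space \<Rightarrow> real) \<Rightarrow> ('a \<Rightarrow> real)"
    and q :: "'a \<Rightarrow> 'a \<Rightarrow> real"
    and t :: real
  assumes semigroup: "markovian_semigroup P"
    and t_pos: "t > 0"
    and q_meas: "(\<lambda>(x, y). q x y) \<in> borel_measurable borel"
    and q_nonneg: "\<And>x y. q x y \<ge> 0"
    and kernel: "\<And>f x. f \<in> Bb \<Longrightarrow> P t f x = (\<integral>y. f y * q x y \<partial>lborel)"
    and fel: "feller (P t)"
    and loc_Lp: "\<And>M x0. M > 0 \<Longrightarrow> \<exists>p>1. \<exists>\<gamma>>0.
        (SUP x\<in>ball x0 \<gamma>. \<integral>\<^sup>+ y. indicator {y. norm y \<le> M} y * ennreal (q x y powr p) \<partial>lborel) < \<infinity>"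
  shows "strong_feller (P t)"
proof -
  have markov: "markovian_op (P t)"
    using semigroup t_pos by (simp add: markovian_semigroup_def)
  have q_measurable: "q x \<in> borel_measurable borel" for x
  proof -
    have "(\<lambda>y::'a. (x, y)) \<in> borel_measurable borel"
      by (intro borel_measurable_continuous_onI continuous_intros)
    from measurable_compose[OF this q_meas] show ?thesis by simp
  qed
  have q_integrable: "integrable lborel (q x)" for x
  proof -
    have "(\<integral> y. q x y \<partial>lborel) = 1"
      using kernel[of "\<lambda>_. 1" x] markov by (simp add: markovian_op_def Bb_def)
    \<comment> \<open>a non-integrable function has Bochner integral 0\<close>
    then show ?thesis using not_integrable_integral_eq by force
  qed
  have feller_Bb: "continuous_on UNIV (P t g)" if "g \<in> Bb" "continuous_on UNIV g" for g
    using fel that by (simp add: feller_def)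
  show ?thesis
    unfolding strong_feller_def
  proof (intro ballI conjI)
    fix f :: "'a \<Rightarrow> real"
    assume "f \<in> Bb"
    then show "continuous_on UNIV (P t f)"
      using continuous_on_kernel[where T = "P t", OF q_measurable q_nonneg q_integrable kernel feller_Bb loc_Lp]
      by blast
    show "bounded (range (P t f))"
      using markov \<open>f \<in> Bb\<close> by (simp add: markovian_op_def Bb_def)
  qed
qed

end
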